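(* Let $m,n,d$ be positive integers and let $w_1,w_2$ be positive integers with $w_1\mid w_2$ and $w_2\mid m$. Then $$A\left(m\frac{w_1}{w_2},\,n\frac{w_2}{w_1},\,w_1,\,d\right)\ge\left\lceil\frac{\binom{m w_1/w_2}{w_1}^{n w_2/w_1}}{\binom{m}{w_2}^n}A(m,n,w_2,d)\right\rceil.$$ Consequently, for all positive integers $m,n,w,d$ with $w\mid m$, $$\frac{\binom{m}{w}^n}{\binom{mn}{wn}}B(mn,nw,d)\le A(m,n,w,d)\le\frac{\binom{m}{w}^n}{\left(\frac{m}{w}\right)^{nw}}C\left(\frac{m}{w},nw,d\right).$$
   Context: $J(m,w)$ denotes the set of binary vectors of length $m$ and Hamming weight $w$. Elements of $J(m,w)^n$ are identified with $m\times n$ binary matrices all of whose columns have weight $w$, with binary Hamming distance. $A(m,n,w,d)$ is the maximum cardinality of a nonempty subset of $J(m,w)^n$ with pairwise Hamming distances at least $2d$. $B(N,W,d)$ is the maximum cardinality of a nonempty subset of $J(N,W)$ with pairwise Hamming distances at least $2d$. $C(q,n,d)$ is the maximum cardinality of a nonempty subset of $[q]^n$, $[q]=\{0,\dots,q-1\}$, with pairwise Hamming distances (number of differing coordinates) at least $d$. *)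

theory Defs
  imports Complex_Main
begin

text \<open>Binary vectors of length N are encoded by their supports (subsets of {..<N});
binary m x n matrices by their supports (subsets of {..<m} x {..<n}).\<close>

definition hdist :: "'a set \<Rightarrow> 'a set \<Rightarrow> nat" where
  "hdist X Y = card ((X - Y) \<union> (Y - X))"

definition Jset :: "nat \<Rightarrow> nat \<Rightarrow> nat set set" where
  "Jset N W = {x. x \<subseteq> {..<N} \<and> card x = W}"

definition Jmat :: "nat \<Rightarrow> nat \<Rightarrow> nat \<Rightarrow> (nat \<times> nat) set set" where
  "Jmat m n w = {X. X \<subseteq> {..<m} \<times> {..<n} \<and> (\<forall>j<n. card {i. (i, j) \<in> X} = w)}"

definition A_code :: "nat \<Rightarrow> nat \<Rightarrow> nat \<Rightarrow> nat \<Rightarrow> nat" where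
  "A_code m n w d = Max {card S | S. S \<subseteq> Jmat m n w \<and> S \<noteq> {} \<and>
      (\<forall>x\<in>S. \<forall>y\<in>S. x \<noteq> y \<longrightarrow> 2 * d \<le> hdist x y)}"

definition B_code :: "nat \<Rightarrow> nat \<Rightarrow> nat \<Rightarrow> nat" where
  "B_code N W d = Max {card S | S. S \<subseteq> Jset N W \<and> S \<noteq> {} \<and>
      (\<forall>x\<in>S. \<forall>y\<in>S. x \<noteq> y \<longrightarrow> 2 * d \<le> hdist x y)}"

definition qwords :: "nat \<Rightarrow> nat \<Rightarrow> (nat \<Rightarrow> nat) set" where
  "qwords q n = {f. (\<forall>i<n. f i < q) \<and> (\<forall>i\<ge>n. f i = 0)}"

definition qdist :: "nat \<Rightarrow> (nat \<Rightarrow> nat) \<Rightarrow> (nat \<Rightarrow> nat) \<Rightarrow> nat" where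
  "qdist n f g = card {i. i < n \<and> f i \<noteq> g i}"

definition C_code :: "nat \<Rightarrow> nat \<Rightarrow> nat \<Rightarrow> nat" where
  "C_code q n d = Max {card S | S. S \<subseteq> qwords q n \<and> S \<noteq> {} \<and>
      (\<forall>x\<in>S. \<forall>y\<in>S. x \<noteq> y \<longrightarrow> d \<le> qdist n x y)}"

end

theory Submission
  imports Defs "HOL-Combinatorics.Permutations" "HOL-Library.FuncSet"
begin

text \<open>
  Averaging: if a finite group acts transitively on a space U and preserves its distance, then
  for every code C and every T in U some translate of C meets T in at least
  card C * card T / card U points. Taking for T the image of a distance-preserving embedding
  of a smaller space V gives A(U) * card V \<le> A(V) * card U.

  Stacking each group of k consecutive columns on top of each other embeds J(m,w)^(nk) into
  J(km,kw)^n, and permutations of the rows within each column act transitively on the latter;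
  this is the first inequality. The lower bound is its case of a single target column, since
  B(N,W,d) = A(N,1,W,d); the upper bound is its case w = 1, since the one-hot encoding
  identifies [q]^N with J(q,1)^N and doubles distances, so C(q,N,d) = A(q,N,1,d).
\<close>

section \<open>Maximum codes\<close>

definition dist_code :: "('a \<Rightarrow> 'a \<Rightarrow> nat) \<Rightarrow> nat \<Rightarrow> 'a set \<Rightarrow> bool" where
  "dist_code \<delta> k S \<longleftrightarrow> (\<forall>x\<in>S. \<forall>y\<in>S. x \<noteq> y \<longrightarrow> k \<le> \<delta> x y)"

definition max_code :: "'a set \<Rightarrow> ('a \<Rightarrow> 'a \<Rightarrow> nat) \<Rightarrow> nat \<Rightarrow> nat" where
  "max_code U \<delta> k = Max {card S | S. S \<subseteq> U \<and> S \<noteq> {} \<and> dist_code \<delta> k S}"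

lemma A_code_eq_max_code: "A_code m n w d = max_code (Jmat m n w) hdist (2 * d)"
  by (simp add: A_code_def max_code_def dist_code_def)

lemma B_code_eq_max_code: "B_code N W d = max_code (Jset N W) hdist (2 * d)"
  by (simp add: B_code_def max_code_def dist_code_def)

lemma C_code_eq_max_code: "C_code q N d = max_code (qwords q N) (qdist N) d"
  by (simp add: C_code_def max_code_def dist_code_def)

lemma finite_code_sizes:
  "finite U \<Longrightarrow> finite {card S | S. S \<subseteq> U \<and> S \<noteq> {} \<and> dist_code \<delta> k S}"
  by (rule finite_subset[of _ "{..card U}"]) (auto intro: card_mono)

lemma card_le_max_code:
  assumes "finite U" "S \<subseteq> U" "S \<noteq> {}" "dist_code \<delta> k S"
  shows "card S \<le> max_code U \<delta> k"
  unfolding max_code_def using assms by (intro Max_ge finite_code_sizes) auto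

lemma max_code_attained:
  assumes "finite U" "U \<noteq> {}"
  obtains S where "S \<subseteq> U" "S \<noteq> {}" "dist_code \<delta> k S" "card S = max_code U \<delta> k"
proof -
  obtain x where "x \<in> U" using assms(2) by blast
  then have "{x} \<subseteq> U \<and> {x} \<noteq> {} \<and> dist_code \<delta> k {x}" by (simp add: dist_code_def)
  then have "{card S | S. S \<subseteq> U \<and> S \<noteq> {} \<and> dist_code \<delta> k S} \<noteq> {}" by blast
  then have "max_code U \<delta> k \<in> {card S | S. S \<subseteq> U \<and> S \<noteq> {} \<and> dist_code \<delta> k S}"
    unfolding max_code_def using assms(1) by (intro Max_in finite_code_sizes)
  then obtain S where "S \<subseteq> U" "S \<noteq> {}" "dist_code \<delta> k S" "card S = max_code U \<delta> k"
    by (smt (verit) mem_Collect_eq)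
  then show thesis by (rule that)
qed

lemma dist_code_image:
  assumes "inj_on F U" "S \<subseteq> U" "dist_code \<delta> k S"
    and "\<And>x y. x \<in> U \<Longrightarrow> y \<in> U \<Longrightarrow> k \<le> \<delta> x y \<Longrightarrow> k' \<le> \<delta>' (F x) (F y)"
  shows "dist_code \<delta>' k' (F ` S)"
  unfolding dist_code_def
proof (intro ballI impI)
  fix u v assume "u \<in> F ` S" "v \<in> F ` S" "u \<noteq> v"
  then obtain x y where "x \<in> S" "y \<in> S" "u = F x" "v = F y" "x \<noteq> y" by blast
  then show "k' \<le> \<delta>' u v" using assms unfolding dist_code_def by blast
qed

lemma dist_code_preimage:
  assumes "inj_on F U" "dist_code \<delta> k D"
    and "\<And>x y. x \<in> U \<Longrightarrow> y \<in> U \<Longrightarrow> k \<le> \<delta> (F x) (F y) \<Longrightarrow> k' \<le> \<delta>' x y"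
  shows "dist_code \<delta>' k' {x\<in>U. F x \<in> D}"
  unfolding dist_code_def
proof (intro ballI impI)
  fix x y assume "x \<in> {x\<in>U. F x \<in> D}" "y \<in> {x\<in>U. F x \<in> D}" "x \<noteq> y"
  moreover then have "F x \<noteq> F y" using assms(1) by (auto dest: inj_onD)
  ultimately show "k' \<le> \<delta>' x y" using assms(2,3) unfolding dist_code_def by blast
qed

lemma max_code_le_embedding:
  assumes "finite V" "U \<noteq> {}" "inj_on F U" "F ` U \<subseteq> V"
    and "\<And>x y. x \<in> U \<Longrightarrow> y \<in> U \<Longrightarrow> k \<le> \<delta> x y \<Longrightarrow> k' \<le> \<delta>' (F x) (F y)"
  shows "max_code U \<delta> k \<le> max_code V \<delta>' k'"
proof -
  have "finite U" using assms(1,3,4) finite_image_iff finite_subset by metis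
  then obtain S where S: "S \<subseteq> U" "S \<noteq> {}" "dist_code \<delta> k S" "card S = max_code U \<delta> k"
    using max_code_attained assms(2) by metis
  have "card (F ` S) = card S" using S(1) assms(3) by (meson card_image inj_on_subset)
  moreover have "dist_code \<delta>' k' (F ` S)"
    using assms(3) S(1,3) assms(5) by (rule dist_code_image)
  then have "card (F ` S) \<le> max_code V \<delta>' k'"
    using S(1,2) assms(1,4) by (intro card_le_max_code) auto
  ultimately show ?thesis using S(4) by simp
qed

lemma max_code_bij_betw:
  assumes F: "bij_betw F U V" and "finite V" "U \<noteq> {}"
    and transfer: "\<And>x y. x \<in> U \<Longrightarrow> y \<in> U \<Longrightarrow> k' \<le> \<delta>' (F x) (F y) \<longleftrightarrow> k \<le> \<delta> x y"
  shows "max_code V \<delta>' k' = max_code U \<delta> k"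
proof (rule antisym)
  have inj: "inj_on F U" and V: "V = F ` U" using F by (auto simp: bij_betw_def)
  have "finite U" using F \<open>finite V\<close> bij_betw_finite by blast
  show "max_code U \<delta> k \<le> max_code V \<delta>' k'"
  proof (rule max_code_le_embedding[OF \<open>finite V\<close> \<open>U \<noteq> {}\<close> inj])
    show "F ` U \<subseteq> V" by (simp add: V)
  qed (simp add: transfer)
  show "max_code V \<delta>' k' \<le> max_code U \<delta> k"
  proof (rule max_code_le_embedding[of U V "inv_into U F"])
    show "inj_on (inv_into U F) V" "inv_into U F ` V \<subseteq> U"
      using bij_betw_inv_into[OF F] by (auto simp: bij_betw_def)
  next
    fix x y assume "x \<in> V" "y \<in> V" "k' \<le> \<delta>' x y"
    then obtain x' y' where "x' \<in> U" "y' \<in> U" "x = F x'" "y = F y'" "k' \<le> \<delta>' (F x') (F y')"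
      using V by blast
    then show "k \<le> \<delta> (inv_into U F x) (inv_into U F y)"
      using transfer inv_into_f_f[OF inj] by simp
  next
    show "V \<noteq> {}" using V \<open>U \<noteq> {}\<close> by blast
  qed fact
qed

section \<open>Averaging over a transitive group action\<close>

locale transitive_action =
  fixes G :: "('a \<Rightarrow> 'a) set" and U :: "'a set"
  assumes finite_G: "finite G"
    and comp_closed: "\<sigma> \<in> G \<Longrightarrow> \<tau> \<in> G \<Longrightarrow> \<sigma> \<circ> \<tau> \<in> G"
    and left_inverse: "\<sigma> \<in> G \<Longrightarrow> \<exists>\<tau>\<in>G. \<tau> \<circ> \<sigma> = id"
    and maps_into: "\<sigma> \<in> G \<Longrightarrow> x \<in> U \<Longrightarrow> \<sigma> x \<in> U"
    and transitive: "x \<in> U \<Longrightarrow> y \<in> U \<Longrightarrow> \<exists>\<sigma>\<in>G. \<sigma> x = y"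
begin

lemma finite_U: "finite U"
proof (cases "U = {}")
  case False
  then obtain x where "x \<in> U" by blast
  then have "U \<subseteq> (\<lambda>\<sigma>. \<sigma> x) ` G" using transitive by blast
  then show ?thesis using finite_G finite_surj by blast
qed simp

lemma inj_G: "\<sigma> \<in> G \<Longrightarrow> inj \<sigma>"
  using left_inverse inj_on_imageI2[of _ \<sigma> UNIV] by (metis inj_on_id)

lemma card_transporter_le:
  assumes "\<psi> \<in> G"
  shows "card {\<sigma>\<in>G. \<sigma> x = y} \<le> card {\<sigma>\<in>G. \<sigma> x = \<psi> y}"
proof (rule card_inj_on_le)
  show "inj_on ((\<circ>) \<psi>) {\<sigma>\<in>G. \<sigma> x = y}"
    using inj_G[OF assms] by (intro inj_onI) (simp add: fun_eq_iff injD)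
  show "(\<circ>) \<psi> ` {\<sigma>\<in>G. \<sigma> x = y} \<subseteq> {\<sigma>\<in>G. \<sigma> x = \<psi> y}"
    using assms comp_closed by force
qed (simp add: finite_G)

lemma card_transporter:
  assumes "x \<in> U" "y \<in> U"
  shows "card {\<sigma>\<in>G. \<sigma> x = y} = card {\<sigma>\<in>G. \<sigma> x = x}"
proof -
  obtain \<psi> where \<psi>: "\<psi> \<in> G" "\<psi> x = y" using transitive assms by blast
  then obtain \<tau> where \<tau>: "\<tau> \<in> G" "\<tau> \<circ> \<psi> = id" using left_inverse by blast
  then have "\<tau> y = x" using \<psi>(2) by (metis comp_apply id_apply)
  then show ?thesis
    using card_transporter_le[OF \<psi>(1), of x x] card_transporter_le[OF \<tau>(1), of x y] \<psi>(2)
    by simp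
qed

lemma card_transporters_into:
  assumes "x \<in> U" "A \<subseteq> U"
  shows "card {\<sigma>\<in>G. \<sigma> x \<in> A} = card A * card {\<sigma>\<in>G. \<sigma> x = x}"
proof -
  have "{\<sigma>\<in>G. \<sigma> x \<in> A} = (\<Union>y\<in>A. {\<sigma>\<in>G. \<sigma> x = y})" by auto
  then have "card {\<sigma>\<in>G. \<sigma> x \<in> A} = (\<Sum>y\<in>A. card {\<sigma>\<in>G. \<sigma> x = y})"
    using finite_subset[OF assms(2) finite_U] finite_G by (auto intro: card_UN_disjoint)
  also have "\<dots> = (\<Sum>y\<in>A. card {\<sigma>\<in>G. \<sigma> x = x})"
    using assms by (intro sum.cong refl card_transporter) auto
  finally show ?thesis by simp
qed

lemma orbit_stabilizer:
  assumes "x \<in> U"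
  shows "card G = card U * card {\<sigma>\<in>G. \<sigma> x = x}"
proof -
  have "{\<sigma>\<in>G. \<sigma> x \<in> U} = G" using assms maps_into by blast
  then show ?thesis using card_transporters_into[OF assms order_refl] by simp
qed

lemma exists_translate_meeting:
  assumes "C \<subseteq> U" "T \<subseteq> U" "C \<noteq> {}"
  shows "\<exists>\<sigma>\<in>G. card C * card T \<le> card {x\<in>C. \<sigma> x \<in> T} * card U"
proof (rule ccontr)
  assume "\<not> ?thesis"
  then have less: "card {x\<in>C. \<sigma> x \<in> T} * card U < card C * card T" if "\<sigma> \<in> G" for \<sigma>
    using that by auto
  obtain x where "x \<in> C" using assms(3) by blast
  then have "G \<noteq> {}" using transitive assms(1) by blast
  have finC: "finite C" using assms(1) finite_U finite_subset by blast
  have count: "card {a\<in>A. P a} = (\<Sum>a\<in>A. if P a then 1 else 0)" if "finite A" for A :: "'b set" and P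
    using that by (simp add: sum.inter_filter[symmetric])
  have "(\<Sum>\<sigma>\<in>G. card {x\<in>C. \<sigma> x \<in> T}) = (\<Sum>\<sigma>\<in>G. \<Sum>x\<in>C. if \<sigma> x \<in> T then 1 else 0)"
    using finC by (simp add: count)
  also have "\<dots> = (\<Sum>x\<in>C. \<Sum>\<sigma>\<in>G. if \<sigma> x \<in> T then 1 else 0)"
    by (rule sum.swap)
  also have "\<dots> = (\<Sum>x\<in>C. card {\<sigma>\<in>G. \<sigma> x \<in> T})"
    using finite_G by (simp add: count)
  also have "\<dots> = (\<Sum>x\<in>C. card T * card {\<sigma>\<in>G. \<sigma> x = x})"
    using assms card_transporters_into by (intro sum.cong) auto
  finally have "(\<Sum>\<sigma>\<in>G. card {x\<in>C. \<sigma> x \<in> T}) * card U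
      = (\<Sum>x\<in>C. card T * card {\<sigma>\<in>G. \<sigma> x = x} * card U)"
    by (simp add: sum_distrib_right)
  also have "\<dots> = (\<Sum>x\<in>C. card T * card G)"
  proof (rule sum.cong[OF refl])
    fix x assume "x \<in> C"
    then show "card T * card {\<sigma>\<in>G. \<sigma> x = x} * card U = card T * card G"
      using orbit_stabilizer[of x] assms(1) by auto
  qed
  finally have "(\<Sum>\<sigma>\<in>G. card {x\<in>C. \<sigma> x \<in> T}) * card U = card G * (card C * card T)"
    by simp
  moreover have "(\<Sum>\<sigma>\<in>G. card {x\<in>C. \<sigma> x \<in> T}) * card U < card G * (card C * card T)"
    using sum_strict_mono[OF finite_G \<open>G \<noteq> {}\<close> less] by (simp add: sum_distrib_right)
  ultimately show False by simp
qed

lemma exists_subcode: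
  assumes invariant: "\<And>\<sigma> x y. \<sigma> \<in> G \<Longrightarrow> x \<in> U \<Longrightarrow> y \<in> U \<Longrightarrow> \<delta> (\<sigma> x) (\<sigma> y) = \<delta> x y"
    and C: "C \<subseteq> U" "C \<noteq> {}" "dist_code \<delta> k C" and "T \<subseteq> U"
  shows "\<exists>D\<subseteq>T. dist_code \<delta> k D \<and> card C * card T \<le> card D * card U"
proof -
  obtain \<sigma> where \<sigma>: "\<sigma> \<in> G" and meet: "card C * card T \<le> card {x\<in>C. \<sigma> x \<in> T} * card U"
    using exists_translate_meeting[OF C(1) \<open>T \<subseteq> U\<close> C(2)] by blast
  have inj\<sigma>: "inj_on \<sigma> U" using inj_on_subset[OF inj_G[OF \<sigma>] subset_UNIV] .
  have "card (\<sigma> ` {x\<in>C. \<sigma> x \<in> T}) = card {x\<in>C. \<sigma> x \<in> T}"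
    using C(1) by (intro card_image inj_on_subset[OF inj\<sigma>]) auto
  moreover have "dist_code \<delta> k (\<sigma> ` {x\<in>C. \<sigma> x \<in> T})"
  proof (rule dist_code_image[OF inj\<sigma>])
    show "{x\<in>C. \<sigma> x \<in> T} \<subseteq> U" using C(1) by blast
    show "dist_code \<delta> k {x\<in>C. \<sigma> x \<in> T}" using C(3) by (auto simp: dist_code_def)
  qed (simp add: invariant[OF \<sigma>])
  moreover have "\<sigma> ` {x\<in>C. \<sigma> x \<in> T} \<subseteq> T" by blast
  ultimately show ?thesis using meet by (intro exI[of _ "\<sigma> ` {x\<in>C. \<sigma> x \<in> T}"]) simp
qed

lemma max_code_embedding_bound:
  assumes invariant: "\<And>\<sigma> x y. \<sigma> \<in> G \<Longrightarrow> x \<in> U \<Longrightarrow> y \<in> U \<Longrightarrow> \<delta> (\<sigma> x) (\<sigma> y) = \<delta> x y"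
    and F: "inj_on F V" "F ` V \<subseteq> U" "V \<noteq> {}"
    and transfer: "\<And>x y. x \<in> V \<Longrightarrow> y \<in> V \<Longrightarrow> k \<le> \<delta> (F x) (F y) \<Longrightarrow> k' \<le> \<delta>' x y"
  shows "max_code U \<delta> k * card V \<le> max_code V \<delta>' k' * card U"
proof -
  have finFV: "finite (F ` V)" using F(2) finite_U by (rule finite_subset)
  then have finV: "finite V" using finite_image_iff[OF F(1)] by simp
  have "U \<noteq> {}" using F(2,3) by blast
  then obtain C where C: "C \<subseteq> U" "C \<noteq> {}" "dist_code \<delta> k C" "card C = max_code U \<delta> k"
    using max_code_attained[OF finite_U] by blast
  obtain D where D: "D \<subseteq> F ` V" "dist_code \<delta> k D" "card C * card (F ` V) \<le> card D * card U"
    using exists_subcode[OF invariant C(1-3) F(2)] by blast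
  define D' where "D' = {x\<in>V. F x \<in> D}"
  have "F ` D' = D" using D(1) unfolding D'_def by blast
  moreover have "inj_on F D'" using F(1) by (rule inj_on_subset) (simp add: D'_def)
  ultimately have card_D': "card D' = card D" by (metis card_image)
  have "finite C" using C(1) finite_U by (rule finite_subset)
  then have "0 < card C * card (F ` V)" using C(2) F(3) finFV by (simp add: card_gt_0_iff)
  then have "D' \<noteq> {}" using D(3) card_D' by auto
  then have D'_le: "card D' \<le> max_code V \<delta>' k'"
    using finV dist_code_preimage[OF F(1) D(2) transfer]
    by (intro card_le_max_code) (auto simp: D'_def)
  have "max_code U \<delta> k * card V = card C * card (F ` V)"
    using C(4) F(1) by (simp add: card_image)
  also have "\<dots> \<le> card D' * card U" using D(3) card_D' by simp
  also have "\<dots> \<le> max_code V \<delta>' k' * card U" using D'_le by (rule mult_le_mono1)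
  finally show ?thesis .
qed

end

section \<open>Matrices with constant column weight\<close>

lemma hdist_image:
  assumes "inj_on f A" "X \<subseteq> A" "Y \<subseteq> A"
  shows "hdist (f ` X) (f ` Y) = hdist X Y"
proof -
  have "(f ` X - f ` Y) \<union> (f ` Y - f ` X) = f ` ((X - Y) \<union> (Y - X))"
    using assms by (auto simp: inj_on_def)
  moreover have "inj_on f ((X - Y) \<union> (Y - X))" using assms by (auto intro: inj_on_subset)
  ultimately show ?thesis unfolding hdist_def by (simp add: card_image)
qed

lemma finite_Jmat: "finite (Jmat m n w)"
  unfolding Jmat_def by (rule finite_subset[of _ "Pow ({..<m} \<times> {..<n})"]) auto

lemma card_Jset: "card (Jset N W) = N choose W"
  unfolding Jset_def using n_subsets[of "{..<N}" W] by simp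

lemma card_Jmat: "card (Jmat m n w) = (m choose w) ^ n"
proof -
  define cols where "cols X = (\<lambda>j\<in>{..<n}. {i. (i, j) \<in> X})" for X :: "(nat \<times> nat) set"
  have "bij_betw cols (Jmat m n w) (PiE {..<n} (\<lambda>_. Jset m w))"
  proof (rule bij_betw_imageI)
    show "inj_on cols (Jmat m n w)"
    proof (rule inj_onI)
      fix X Y assume X: "X \<in> Jmat m n w" and Y: "Y \<in> Jmat m n w" and "cols X = cols Y"
      have "(i, j) \<in> X \<longleftrightarrow> (i, j) \<in> Y" if "j < n" for i j
        using fun_cong[OF \<open>cols X = cols Y\<close>, of j] that unfolding cols_def by auto
      then show "X = Y" using X Y unfolding Jmat_def by auto
    qed
    show "cols ` Jmat m n w = PiE {..<n} (\<lambda>_. Jset m w)"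
    proof (intro equalityI subsetI)
      fix f assume "f \<in> cols ` Jmat m n w"
      then show "f \<in> PiE {..<n} (\<lambda>_. Jset m w)"
        unfolding cols_def Jmat_def Jset_def by auto
    next
      fix f assume f: "f \<in> PiE {..<n} (\<lambda>_. Jset m w)"
      define X where "X = {(i, j). j < n \<and> i \<in> f j}"
      have "X \<in> Jmat m n w" using f unfolding X_def Jmat_def Jset_def by (auto simp: PiE_iff)
      moreover have "cols X = f"
      proof
        fix j show "cols X j = f j"
          using f unfolding cols_def X_def by (cases "j < n") (auto simp: PiE_iff extensional_def)
      qed
      ultimately show "f \<in> cols ` Jmat m n w" by blast
    qed
  qed
  then have "card (Jmat m n w) = card (PiE {..<n} (\<lambda>_. Jset m w))" by (rule bij_betw_same_card)
  also have "\<dots> = (m choose w) ^ n" by (simp add: card_PiE card_Jset)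
  finally show ?thesis .
qed

lemma card_Jmat_columns:
  assumes X: "X \<in> Jmat m n w" and J: "J \<subseteq> {..<n}"
  shows "card {p\<in>X. snd p \<in> J} = card J * w"
proof -
  have "X \<subseteq> {..<m} \<times> {..<n}" using X unfolding Jmat_def by blast
  then have finX: "finite X" by (rule finite_subset) simp
  have "finite J" using J finite_subset by blast
  have "card {p\<in>X. snd p \<in> J} = card (\<Union>j\<in>J. {p\<in>X. snd p = j})"
    by (rule arg_cong[where f = card]) auto
  also have "\<dots> = (\<Sum>j\<in>J. card {p\<in>X. snd p = j})"
    using finX \<open>finite J\<close> by (intro card_UN_disjoint) auto
  also have "\<dots> = (\<Sum>j\<in>J. w)"
  proof (rule sum.cong[OF refl])
    fix j assume "j \<in> J"
    have "{p\<in>X. snd p = j} = (\<lambda>i. (i, j)) ` {i. (i, j) \<in> X}" by force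
    then have "card {p\<in>X. snd p = j} = card {i. (i, j) \<in> X}"
      by (simp add: card_image inj_on_def)
    then show "card {p\<in>X. snd p = j} = w" using X J \<open>j \<in> J\<close> unfolding Jmat_def by auto
  qed
  finally show ?thesis by simp
qed

definition column_perms :: "nat \<Rightarrow> nat \<Rightarrow> (nat \<times> nat \<Rightarrow> nat \<times> nat) set" where
  "column_perms m n = {\<sigma>. \<sigma> permutes {..<m} \<times> {..<n} \<and> (\<forall>p. snd (\<sigma> p) = snd p)}"

lemma permutes_fiberwise:
  assumes "\<And>j. j \<in> B \<Longrightarrow> \<pi> j permutes A"
  shows "(\<lambda>(i, j). if j \<in> B then (\<pi> j i, j) else (i, j)) permutes A \<times> B"
proof (rule bij_imp_permutes)
  show "bij_betw (\<lambda>(i, j). if j \<in> B then (\<pi> j i, j) else (i, j)) (A \<times> B) (A \<times> B)"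
    by (rule bij_betw_byWitness[where f'="\<lambda>(i, j). (inv (\<pi> j) i, j)"])
      (auto simp: permutes_inverses[OF assms] permutes_in_image[OF assms]
        permutes_in_image[OF permutes_inv[OF assms]])
next
  fix p assume "p \<notin> A \<times> B"
  then show "(\<lambda>(i, j). if j \<in> B then (\<pi> j i, j) else (i, j)) p = p"
    by (cases p) (auto simp: permutes_not_in[OF assms])
qed

lemma exists_permutes_image_eq:
  assumes "finite E" "X \<subseteq> E" "Y \<subseteq> E" "card X = card Y"
  shows "\<exists>p. p permutes E \<and> p ` X = Y"
proof -
  obtain f where f: "bij_betw f X Y"
    using assms finite_same_card_bij finite_subset by metis
  have "card (E - X) = card (E - Y)"
    using assms by (simp add: card_Diff_subset finite_subset)
  then obtain g where g: "bij_betw g (E - X) (E - Y)"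
    using assms(1) finite_same_card_bij by (meson finite_Diff)
  define p where "p x = (if x \<in> X then f x else if x \<in> E then g x else x)" for x
  have "bij_betw p X Y" using f by (rule bij_betw_cong[THEN iffD1, rotated]) (simp add: p_def)
  moreover have "bij_betw p (E - X) (E - Y)"
    using g by (rule bij_betw_cong[THEN iffD1, rotated]) (simp add: p_def)
  ultimately have "bij_betw p (X \<union> (E - X)) (Y \<union> (E - Y))" by (rule bij_betw_combine) auto
  then have "bij_betw p E E" using assms(2,3) by (simp add: Un_Diff_cancel Un_absorb1)
  then have "p permutes E" by (rule bij_imp_permutes) (use assms(2) in \<open>auto simp: p_def\<close>)
  moreover have "p ` X = Y" using \<open>bij_betw p X Y\<close> by (simp add: bij_betw_def)
  ultimately show ?thesis by blast
qed

lemma column_perms_transitive: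
  assumes X: "X \<in> Jmat m n w" and Y: "Y \<in> Jmat m n w"
  shows "\<exists>\<sigma>\<in>column_perms m n. \<sigma> ` X = Y"
proof -
  have "\<forall>j\<in>{..<n}. \<exists>\<pi>. \<pi> permutes {..<m} \<and> \<pi> ` {i. (i, j) \<in> X} = {i. (i, j) \<in> Y}"
    using X Y unfolding Jmat_def by (auto intro!: exists_permutes_image_eq)
  then obtain \<pi> where \<pi>: "\<And>j. j \<in> {..<n} \<Longrightarrow> \<pi> j permutes {..<m}"
      "\<And>j. j \<in> {..<n} \<Longrightarrow> \<pi> j ` {i. (i, j) \<in> X} = {i. (i, j) \<in> Y}"
    by metis
  define \<sigma> where "\<sigma> = (\<lambda>(i, j). if j \<in> {..<n} then (\<pi> j i, j) else (i, j))"
  have "\<sigma> permutes {..<m} \<times> {..<n}" unfolding \<sigma>_def using \<pi>(1) by (rule permutes_fiberwise)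
  moreover have "\<forall>p. snd (\<sigma> p) = snd p" unfolding \<sigma>_def by auto
  moreover have "\<sigma> ` X = Y"
  proof (intro equalityI subsetI)
    fix p assume "p \<in> \<sigma> ` X"
    then obtain i j where "(i, j) \<in> X" "p = \<sigma> (i, j)" by auto
    moreover have "j < n" using X \<open>(i, j) \<in> X\<close> unfolding Jmat_def by auto
    ultimately show "p \<in> Y" using \<pi>(2)[of j] unfolding \<sigma>_def by auto
  next
    fix p assume "p \<in> Y"
    then obtain a j where p: "p = (a, j)" "j < n" using Y unfolding Jmat_def by auto
    then have "a \<in> \<pi> j ` {i. (i, j) \<in> X}" using \<pi>(2)[of j] \<open>p \<in> Y\<close> by auto
    then obtain i where "(i, j) \<in> X" "\<pi> j i = a" by auto
    then show "p \<in> \<sigma> ` X" using p unfolding \<sigma>_def by (auto intro: rev_image_eqI)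
  qed
  ultimately show ?thesis unfolding column_perms_def by blast
qed

lemma column_perms_Jmat:
  assumes "\<sigma> \<in> column_perms m n" "X \<in> Jmat m n w"
  shows "\<sigma> ` X \<in> Jmat m n w"
proof -
  have \<sigma>: "\<sigma> permutes {..<m} \<times> {..<n}" "\<And>p. snd (\<sigma> p) = snd p"
    using assms(1) unfolding column_perms_def by auto
  have "\<sigma> ` X \<subseteq> {..<m} \<times> {..<n}"
    using assms(2) permutes_image[OF \<sigma>(1)] unfolding Jmat_def by blast
  moreover have "card {i. (i, j) \<in> \<sigma> ` X} = card {i. (i, j) \<in> X}" for j
  proof -
    have "{i. (i, j) \<in> \<sigma> ` X} = (\<lambda>i. fst (\<sigma> (i, j))) ` {i. (i, j) \<in> X}"
      using \<sigma>(2) by (force simp: image_iff prod_eq_iff)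
    moreover have "inj_on (\<lambda>i. fst (\<sigma> (i, j))) {i. (i, j) \<in> X}"
    proof (rule inj_onI)
      fix x y assume "fst (\<sigma> (x, j)) = fst (\<sigma> (y, j))"
      then have "\<sigma> (x, j) = \<sigma> (y, j)" using \<sigma>(2)[of "(x, j)"] \<sigma>(2)[of "(y, j)"] by (simp add: prod_eq_iff)
      then show "x = y" using permutes_inj[OF \<sigma>(1)] by (auto dest: injD)
    qed
    ultimately show ?thesis by (simp add: card_image)
  qed
  ultimately show ?thesis using assms(2) unfolding Jmat_def by auto
qed

lemma column_perms_action: "transitive_action (image ` column_perms m n) (Jmat m n w)"
proof
  have "finite {\<sigma>. \<sigma> permutes {..<m} \<times> {..<n}}" by (simp add: finite_permutations)
  moreover have "column_perms m n \<subseteq> {\<sigma>. \<sigma> permutes {..<m} \<times> {..<n}}"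
    unfolding column_perms_def by blast
  ultimately show "finite (image ` column_perms m n)" by (simp add: finite_subset)
next
  fix S T assume "S \<in> image ` column_perms m n" "T \<in> image ` column_perms m n"
  then obtain \<sigma> \<tau> where "\<sigma> \<in> column_perms m n" "\<tau> \<in> column_perms m n" "S = image \<sigma>" "T = image \<tau>"
    by blast
  moreover have "\<sigma> \<circ> \<tau> \<in> column_perms m n"
    using calculation(1,2) unfolding column_perms_def by (simp add: permutes_compose) (metis prod.collapse)
  moreover have "image \<sigma> \<circ> image \<tau> = image (\<sigma> \<circ> \<tau>)" by (auto simp: fun_eq_iff image_comp)
  ultimately show "S \<circ> T \<in> image ` column_perms m n" by auto
next
  fix S assume "S \<in> image ` column_perms m n"
  then obtain \<sigma> where \<sigma>: "\<sigma> \<in> column_perms m n" "S = image \<sigma>" by blast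
  then have p: "\<sigma> permutes {..<m} \<times> {..<n}" and snd_\<sigma>: "\<And>p. snd (\<sigma> p) = snd p"
    unfolding column_perms_def by auto
  have "snd (inv \<sigma> p) = snd p" for p
    using snd_\<sigma>[of "inv \<sigma> p"] permutes_inverses(1)[OF p, of p] by simp
  then have "inv \<sigma> \<in> column_perms m n"
    unfolding column_perms_def using permutes_inv[OF p] by blast
  moreover have "image (inv \<sigma>) \<circ> image \<sigma> = id"
    using permutes_inj[OF p] by (auto simp: fun_eq_iff image_inv_f_f)
  ultimately show "\<exists>T\<in>image ` column_perms m n. T \<circ> S = id" using \<sigma>(2) by blast
next
  fix S X assume "S \<in> image ` column_perms m n" "X \<in> Jmat m n w"
  then show "S X \<in> Jmat m n w" using column_perms_Jmat by blast
next
  fix X Y assume "X \<in> Jmat m n w" "Y \<in> Jmat m n w"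
  then obtain \<sigma> where "\<sigma> \<in> column_perms m n" "\<sigma> ` X = Y" using column_perms_transitive by blast
  then show "\<exists>S\<in>image ` column_perms m n. S X = Y" by (intro bexI[of _ "image \<sigma>"]) auto
qed

section \<open>Stacking columns\<close>

lemma Collect_div_eq:
  fixes k :: nat
  assumes "0 < k"
  shows "{j. j div k = a} = (\<lambda>r. a * k + r) ` {..<k}"
proof (intro equalityI subsetI)
  fix j assume "j \<in> {j. j div k = a}"
  then have "j = a * k + j mod k" using div_mult_mod_eq[of j k] by simp
  then show "j \<in> (\<lambda>r. a * k + r) ` {..<k}" using assms by (auto intro: rev_image_eqI)
qed (use assms in auto)

text \<open>Column j of an m x nk matrix becomes block j mod k of column j div k of a km x n matrix.\<close>

definition stack :: "nat \<Rightarrow> nat \<Rightarrow> nat \<times> nat \<Rightarrow> nat \<times> nat" where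
  "stack m k = (\<lambda>(i, j). (i + m * (j mod k), j div k))"

lemma inj_on_stack: "inj_on (stack m k) ({..<m} \<times> UNIV)"
proof (rule inj_onI)
  fix p p' assume "p \<in> {..<m} \<times> UNIV" "p' \<in> {..<m} \<times> UNIV" "stack m k p = stack m k p'"
  then obtain i j i' j' where p: "p = (i, j)" "p' = (i', j')" "i < m" "i' < m"
    and eq: "i + m * (j mod k) = i' + m * (j' mod k)" "j div k = j' div k"
    by (auto simp: stack_def split: prod.splits)
  from arg_cong[OF eq(1), of "\<lambda>x. x mod m"] arg_cong[OF eq(1), of "\<lambda>x. x div m"] p(3,4)
  have "i = i'" "j mod k = j' mod k" by simp_all
  then show "p = p'" using p eq(2) by (metis div_mult_mod_eq)
qed

lemma card_column_stack:
  assumes k: "0 < k" and X: "X \<in> Jmat m (n * k) w" and "j' < n"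
  shows "card {a. (a, j') \<in> stack m k ` X} = k * w"
proof -
  have XE: "X \<subseteq> {..<m} \<times> UNIV" using X unfolding Jmat_def by blast
  define J where "J = {j. j div k = j'}"
  have col: "{a. (a, j') \<in> stack m k ` X} = (fst \<circ> stack m k) ` {p\<in>X. snd p \<in> J}"
    by (force simp: stack_def J_def)
  have inj: "inj_on (fst \<circ> stack m k) {p\<in>X. snd p \<in> J}"
  proof (rule inj_onI)
    fix p p' assume p: "p \<in> {p\<in>X. snd p \<in> J}" and p': "p' \<in> {p\<in>X. snd p \<in> J}"
      and fst_eq: "(fst \<circ> stack m k) p = (fst \<circ> stack m k) p'"
    have "snd (stack m k p) = snd (stack m k p')"
      using p p' by (auto simp: stack_def J_def split: prod.splits)
    with fst_eq have "stack m k p = stack m k p'" by (simp add: prod_eq_iff)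
    then show "p = p'" by (rule inj_onD[OF inj_on_stack]) (use p p' XE in auto)
  qed
  have "J = (\<lambda>r. j' * k + r) ` {..<k}" unfolding J_def using k by (rule Collect_div_eq)
  then have J: "J \<subseteq> {..<n * k}" "card J = k"
    using \<open>j' < n\<close> mult_le_mono1[of "Suc j'" n k] by (auto simp: card_image inj_on_def)
  have "card {a. (a, j') \<in> stack m k ` X} = card {p\<in>X. snd p \<in> J}"
    unfolding col using inj by (rule card_image)
  also have "\<dots> = k * w" using card_Jmat_columns[OF X J(1)] J(2) by simp
  finally show ?thesis .
qed

lemma stack_Jmat:
  assumes k: "0 < k" and X: "X \<in> Jmat m (n * k) w"
  shows "stack m k ` X \<in> Jmat (k * m) n (k * w)"
proof -
  have "stack m k ` X \<subseteq> {..<k * m} \<times> {..<n}"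
  proof
    fix q assume "q \<in> stack m k ` X"
    then obtain i j where "(i, j) \<in> X" "q = (i + m * (j mod k), j div k)"
      by (auto simp: stack_def)
    moreover have "i < m" "j < n * k" using X \<open>(i, j) \<in> X\<close> unfolding Jmat_def by auto
    moreover have "m * Suc (j mod k) \<le> m * k"
      using k by (intro mult_le_mono2) (simp add: Suc_leI)
    ultimately show "q \<in> {..<k * m} \<times> {..<n}"
      by (auto simp: less_mult_imp_div_less mult.commute[of k m])
  qed
  then show ?thesis using card_column_stack[OF k X] unfolding Jmat_def by blast
qed

lemma A_code_stack_bound:
  assumes "0 < k" "w \<le> m"
  shows "A_code (k * m) n (k * w) d * (m choose w) ^ (n * k)
    \<le> A_code m (n * k) w d * (k * m choose (k * w)) ^ n"
proof -
  interpret transitive_action "image ` column_perms (k * m) n" "Jmat (k * m) n (k * w)"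
    by (rule column_perms_action)
  have Jmat_sub: "Jmat m (n * k) w \<subseteq> Pow ({..<m} \<times> UNIV)" unfolding Jmat_def by blast
  have "max_code (Jmat (k * m) n (k * w)) hdist (2 * d) * card (Jmat m (n * k) w)
    \<le> max_code (Jmat m (n * k) w) hdist (2 * d) * card (Jmat (k * m) n (k * w))"
  proof (rule max_code_embedding_bound)
    fix S x y assume "S \<in> image ` column_perms (k * m) n"
    then obtain \<sigma> where "S = image \<sigma>" "\<sigma> permutes {..<k * m} \<times> {..<n}"
      unfolding column_perms_def by blast
    then show "hdist (S x) (S y) = hdist x y"
      using hdist_image[of \<sigma> UNIV] permutes_inj by blast
  next
    show "inj_on (image (stack m k)) (Jmat m (n * k) w)"
      using inj_on_image_Pow[OF inj_on_stack] Jmat_sub by (rule inj_on_subset)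
    show "image (stack m k) ` Jmat m (n * k) w \<subseteq> Jmat (k * m) n (k * w)"
      using stack_Jmat[OF assms(1)] by blast
    show "Jmat m (n * k) w \<noteq> {}"
      using assms(2) unfolding Jmat_def by (auto intro!: exI[of _ "{..<w} \<times> {..<n * k}"])
  next
    fix x y assume "x \<in> Jmat m (n * k) w" "y \<in> Jmat m (n * k) w"
      "2 * d \<le> hdist (stack m k ` x) (stack m k ` y)"
    moreover have "hdist (stack m k ` x) (stack m k ` y) = hdist x y"
      using Jmat_sub calculation(1,2) by (intro hdist_image[OF inj_on_stack]) auto
    ultimately show "2 * d \<le> hdist x y" by simp
  qed
  then show ?thesis by (simp add: A_code_eq_max_code card_Jmat)
qed

section \<open>Constant-weight and q-ary codes as matrix codes\<close>

lemma hdist_Times_singleton: "hdist (X \<times> {c}) (Y \<times> {c}) = hdist X Y"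
proof -
  have "Z \<times> {c} = (\<lambda>i. (i, c)) ` Z" for Z :: "'a set" by auto
  then show ?thesis using hdist_image[of "\<lambda>i. (i, c)" UNIV X Y] by (simp add: inj_on_def)
qed

lemma bij_betw_Jset_Jmat: "bij_betw (\<lambda>X. X \<times> {0::nat}) (Jset N W) (Jmat N 1 W)"
proof (rule bij_betw_imageI)
  show "inj_on (\<lambda>X. X \<times> {0::nat}) (Jset N W)" by (rule inj_onI) (simp add: Times_eq_cancel2)
  show "(\<lambda>X. X \<times> {0::nat}) ` Jset N W = Jmat N 1 W"
  proof (intro equalityI subsetI)
    fix Y assume "Y \<in> (\<lambda>X. X \<times> {0::nat}) ` Jset N W"
    then show "Y \<in> Jmat N 1 W" unfolding Jset_def Jmat_def by auto
  next
    fix Y assume Y: "Y \<in> Jmat N 1 W"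
    then have "Y = {i. (i, 0) \<in> Y} \<times> {0}" "{i. (i, 0) \<in> Y} \<in> Jset N W"
      unfolding Jmat_def Jset_def by auto
    then show "Y \<in> (\<lambda>X. X \<times> {0::nat}) ` Jset N W" by (metis image_eqI)
  qed
qed

lemma B_code_eq_A_code:
  assumes "W \<le> N"
  shows "B_code N W d = A_code N 1 W d"
  unfolding A_code_eq_max_code B_code_eq_max_code
proof (rule max_code_bij_betw[OF bij_betw_Jset_Jmat finite_Jmat, symmetric])
  show "Jset N W \<noteq> {}" using assms unfolding Jset_def by (auto intro!: exI[of _ "{..<W}"])
qed (simp add: hdist_Times_singleton)

definition one_hot :: "nat \<Rightarrow> (nat \<Rightarrow> nat) \<Rightarrow> (nat \<times> nat) set" where
  "one_hot N f = (\<lambda>t. (f t, t)) ` {..<N}"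

lemma one_hot_diff: "one_hot N f - one_hot N g = (\<lambda>t. (f t, t)) ` {t. t < N \<and> f t \<noteq> g t}"
  unfolding one_hot_def by auto

lemma hdist_one_hot: "hdist (one_hot N f) (one_hot N g) = 2 * qdist N f g"
proof -
  have card_diff: "card (one_hot N f - one_hot N g) = qdist N f g" for f g
    unfolding one_hot_diff qdist_def by (simp add: card_image inj_on_def)
  have "hdist (one_hot N f) (one_hot N g)
      = card (one_hot N f - one_hot N g) + card (one_hot N g - one_hot N f)"
    unfolding hdist_def by (rule card_Un_disjoint) (auto simp: one_hot_def)
  also have "\<dots> = qdist N f g + qdist N g f" by (simp add: card_diff)
  also have "qdist N g f = qdist N f g" unfolding qdist_def by metis
  finally show ?thesis by simp
qed

lemma bij_betw_one_hot: "bij_betw (one_hot N) (qwords q N) (Jmat q N 1)"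
proof (rule bij_betw_imageI)
  show "inj_on (one_hot N) (qwords q N)"
  proof (rule inj_onI)
    fix f g assume "f \<in> qwords q N" "g \<in> qwords q N" "one_hot N f = one_hot N g"
    then have "f t = g t" for t
      using one_hot_diff[of N f g] unfolding qwords_def by (cases "t < N") auto
    then show "f = g" by blast
  qed
  show "one_hot N ` qwords q N = Jmat q N 1"
  proof (intro equalityI subsetI)
    fix Y assume "Y \<in> one_hot N ` qwords q N"
    then obtain f where "f \<in> qwords q N" "Y = one_hot N f" by blast
    moreover have "{i. (i, t) \<in> one_hot N f} = {f t}" if "t < N" for t
      using that unfolding one_hot_def by auto
    ultimately show "Y \<in> Jmat q N 1" unfolding Jmat_def qwords_def one_hot_def by auto
  next
    fix Y assume Y: "Y \<in> Jmat q N 1"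
    then have "\<forall>t<N. \<exists>i. {i'. (i', t) \<in> Y} = {i}" unfolding Jmat_def by (auto simp: card_1_singleton_iff)
    then obtain h where h: "\<And>t. t < N \<Longrightarrow> {i. (i, t) \<in> Y} = {h t}" by metis
    define f where "f t = (if t < N then h t else 0)" for t
    have "f \<in> qwords q N" using Y h unfolding f_def qwords_def Jmat_def by fastforce
    moreover have "one_hot N f = Y" using Y h unfolding f_def one_hot_def Jmat_def by fastforce
    ultimately show "Y \<in> one_hot N ` qwords q N" by blast
  qed
qed

lemma C_code_eq_A_code:
  assumes "0 < q"
  shows "C_code q N d = A_code q N 1 d"
  unfolding A_code_eq_max_code C_code_eq_max_code
proof (rule max_code_bij_betw[OF bij_betw_one_hot finite_Jmat, symmetric])
  show "qwords q N \<noteq> {}" using assms unfolding qwords_def by (auto intro!: exI[of _ "\<lambda>_. 0"])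
qed (simp add: hdist_one_hot)

lemma real_div_mult_le_of_nat:
  fixes a b c e :: nat
  assumes "a * b \<le> c * e" "0 < e"
  shows "real b / real e * real a \<le> real c"
proof -
  have "real a * real b \<le> real c * real e" using assms(1) by (metis of_nat_le_iff of_nat_mult)
  then show ?thesis using assms(2) by (simp add: field_simps)
qed

lemma real_le_div_mult_of_nat:
  fixes a b c e :: nat
  assumes "a * e \<le> c * b" "0 < e"
  shows "real a \<le> real b / real e * real c"
proof -
  have "real a * real e \<le> real c * real b" using assms(1) by (metis of_nat_le_iff of_nat_mult)
  then show ?thesis using assms(2) by (simp add: field_simps)
qed

lemma A_code_refinement_bound:
  fixes m n d w1 w2 :: nat
  assumes "0 < m" "0 < w1" "w1 dvd w2" "w2 dvd m"
  shows "of_int \<lceil>real (m * w1 div w2 choose w1) ^ (n * w2 div w1) / real (m choose w2) ^ n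
      * real (A_code m n w2 d)\<rceil> \<le> real (A_code (m * w1 div w2) (n * w2 div w1) w1 d)"
proof -
  obtain k where "w2 = w1 * k" using \<open>w1 dvd w2\<close> by (rule dvdE)
  then have w2: "w2 = k * w1" by simp
  obtain l where "m = w2 * l" using \<open>w2 dvd m\<close> by (rule dvdE)
  then have m: "m = k * (l * w1)" using w2 by simp
  have "0 < k" "0 < l" using \<open>0 < m\<close> m by simp_all
  have "m * w1 div w2 = l * w1" "n * w2 div w1 = n * k" using \<open>0 < w1\<close> \<open>0 < k\<close> by (simp_all add: m w2)
  moreover have "A_code m n w2 d * (l * w1 choose w1) ^ (n * k)
      \<le> A_code (l * w1) (n * k) w1 d * (m choose w2) ^ n"
    using A_code_stack_bound[OF \<open>0 < k\<close>, of w1 "l * w1" n d] \<open>0 < l\<close> by (simp add: m w2)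
  moreover have "0 < (m choose w2) ^ n" using m w2 \<open>0 < l\<close> by simp
  ultimately have "real (m * w1 div w2 choose w1) ^ (n * w2 div w1) / real (m choose w2) ^ n
      * real (A_code m n w2 d) \<le> real (A_code (m * w1 div w2) (n * w2 div w1) w1 d)"
    using real_div_mult_le_of_nat by (metis of_nat_power)
  then show ?thesis by (metis ceiling_le of_int_le_iff of_int_of_nat_eq)
qed

lemma A_code_lower_bound:
  fixes m n w d :: nat
  assumes "0 < n" "w \<le> m"
  shows "real (m choose w) ^ n / real (m * n choose (w * n)) * real (B_code (m * n) (n * w) d)
    \<le> real (A_code m n w d)"
proof -
  have "A_code (n * m) 1 (n * w) d * (m choose w) ^ (1 * n)
      \<le> A_code m (1 * n) w d * (n * m choose (n * w)) ^ 1"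
    using A_code_stack_bound[OF assms] .
  moreover have "B_code (m * n) (n * w) d = A_code (n * m) 1 (n * w) d"
    using B_code_eq_A_code[of "n * w" "m * n"] assms(2) by (simp add: mult.commute)
  ultimately have "B_code (m * n) (n * w) d * (m choose w) ^ n \<le> A_code m n w d * (m * n choose (w * n))"
    by (simp add: mult.commute)
  moreover have "0 < m * n choose (w * n)" using assms(2) by simp
  ultimately show ?thesis using real_div_mult_le_of_nat by (metis of_nat_power)
qed

lemma A_code_upper_bound:
  fixes m n w d :: nat
  assumes "0 < m" "0 < w" "w dvd m"
  shows "real (A_code m n w d)
    \<le> real (m choose w) ^ n / (real m / real w) ^ (n * w) * real (C_code (m div w) (n * w) d)"
proof -
  obtain q where m: "m = w * q" using \<open>w dvd m\<close> by (rule dvdE)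
  then have "0 < q" using \<open>0 < m\<close> by simp
  have "A_code (w * q) n (w * 1) d * (q choose 1) ^ (n * w) \<le> A_code q (n * w) 1 d * (w * q choose (w * 1)) ^ n"
    using A_code_stack_bound[OF \<open>0 < w\<close>, of 1 q n d] \<open>0 < q\<close> by simp
  then have "A_code m n w d * q ^ (n * w) \<le> C_code q (n * w) d * (m choose w) ^ n"
    using C_code_eq_A_code[OF \<open>0 < q\<close>] m by simp
  moreover have "real m / real w = real q" "m div w = q" using m \<open>0 < w\<close> by simp_all
  moreover have "0 < q ^ (n * w)" using \<open>0 < q\<close> by simp
  ultimately show ?thesis using real_le_div_mult_of_nat by (metis of_nat_power)
qed

theorem proposition11:
  shows "(\<forall>m n d w1 w2 :: nat. 0 < m \<longrightarrow> 0 < n \<longrightarrow> 0 < d \<longrightarrow> 0 < w1 \<longrightarrow> 0 < w2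
            \<longrightarrow> w1 dvd w2 \<longrightarrow> w2 dvd m \<longrightarrow>
            real (A_code (m * w1 div w2) (n * w2 div w1) w1 d)
              \<ge> of_int \<lceil>(real ((m * w1 div w2) choose w1) ^ (n * w2 div w1)
                         / real (m choose w2) ^ n) * real (A_code m n w2 d)\<rceil>)
       \<and> (\<forall>m n w d :: nat. 0 < m \<longrightarrow> 0 < n \<longrightarrow> 0 < w \<longrightarrow> 0 < d \<longrightarrow> w dvd m \<longrightarrow>
            real (m choose w) ^ n / real ((m * n) choose (w * n)) * real (B_code (m * n) (n * w) d)
              \<le> real (A_code m n w d)
            \<and> real (A_code m n w d)
              \<le> real (m choose w) ^ n / (real m / real w) ^ (n * w) * real (C_code (m div w) (n * w) d))"
proof (intro conjI allI impI)
  fix m n d w1 w2 :: nat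
  assume "0 < m" "0 < n" "0 < d" "0 < w1" "0 < w2" "w1 dvd w2" "w2 dvd m"
  then show "of_int \<lceil>real (m * w1 div w2 choose w1) ^ (n * w2 div w1) / real (m choose w2) ^ n
      * real (A_code m n w2 d)\<rceil> \<le> real (A_code (m * w1 div w2) (n * w2 div w1) w1 d)"
    by (intro A_code_refinement_bound)
next
  fix m n w d :: nat
  assume "0 < m" "0 < n" "0 < w" "0 < d" "w dvd m"
  then show "real (m choose w) ^ n / real (m * n choose (w * n)) * real (B_code (m * n) (n * w) d)
      \<le> real (A_code m n w d)"
    by (intro A_code_lower_bound) (simp_all add: dvd_imp_le)
next
  fix m n w d :: nat
  assume "0 < m" "0 < n" "0 < w" "0 < d" "w dvd m"
  then show "real (A_code m n w d)
      \<le> real (m choose w) ^ n / (real m / real w) ^ (n * w) * real (C_code (m div w) (n * w) d)"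
    by (intro A_code_upper_bound)
qed

end
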